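(* Along every trajectory of the Physarum dynamics, the potential difference $\Delta(t)=p_{s_0}(t)-p_{s_1}(t)$ converges to $L^*$, the length of a shortest $s_0$-$s_1$ path in $G$.
   Context: Let $G=(N,E)$ be a finite connected undirected graph with two distinct vertices $s_0$ (source) and $s_1$ (sink). Each edge $e$ has a fixed length $L_e>0$. Each edge has a time-dependent diameter $D_e(t)$ with $D_e(0)>0$, and resistance $R_e=L_e/D_e$. At each time $t$, the vertex potentials $p_v$ (normalized by $p_{s_1}=0$) are the solution of $\sum_{u\in\delta(v)}(p_v-p_u)/R_{uv}=b_v$ for all $v$, where $\delta(v)$ is the set of neighbours of $v$, $b_{s_0}=1$, $b_{s_1}=-1$, $b_v=0$ otherwise; for an edge $e=\{u,v\}$ with an arbitrarily fixed orientation $(u,v)$ the current is $Q_e=(p_u-p_v)/R_e=D_e(p_u-p_v)/L_e$. The diameters evolve by $\dot D_e(t)=|Q_e(t)|-D_e(t)$ for all $e\in E$ (the "Physarum dynamics"). The length of a path is the sum of $L_e$ over its edges. *)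

theory Defs
  imports "HOL-Analysis.Analysis"
begin

definition undirected_graph :: "'v set \<Rightarrow> 'v set set \<Rightarrow> bool" where
  "undirected_graph N E \<longleftrightarrow> finite N \<and> (\<forall>e\<in>E. \<exists>u v. e = {u, v} \<and> u \<in> N \<and> v \<in> N \<and> u \<noteq> v)"

definition is_path :: "'v set set \<Rightarrow> 'v \<Rightarrow> 'v \<Rightarrow> 'v list \<Rightarrow> bool" where
  "is_path E a b ps \<longleftrightarrow> ps \<noteq> [] \<and> hd ps = a \<and> last ps = b \<and> distinct ps \<and>
     (\<forall>i < length ps - 1. {ps ! i, ps ! Suc i} \<in> E)"

definition connected_graph :: "'v set \<Rightarrow> 'v set set \<Rightarrow> bool" where
  "connected_graph N E \<longleftrightarrow> (\<forall>u\<in>N. \<forall>v\<in>N. \<exists>ps. is_path E u v ps)"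

definition path_length :: "('v set \<Rightarrow> real) \<Rightarrow> 'v list \<Rightarrow> real" where
  "path_length L ps = (\<Sum>i < length ps - 1. L {ps ! i, ps ! Suc i})"

definition shortest_path_length :: "'v set set \<Rightarrow> ('v set \<Rightarrow> real) \<Rightarrow> 'v \<Rightarrow> 'v \<Rightarrow> real" where
  "shortest_path_length E L a b = Min (path_length L ` {ps. is_path E a b ps})"

definition supply_vec :: "'v \<Rightarrow> 'v \<Rightarrow> 'v \<Rightarrow> real" where
  "supply_vec s0 s1 v = (if v = s0 then 1 else if v = s1 then -1 else 0)"

definition kirchhoff_potentials ::
  "'v set \<Rightarrow> 'v set set \<Rightarrow> ('v set \<Rightarrow> real) \<Rightarrow> ('v set \<Rightarrow> real) \<Rightarrow> 'v \<Rightarrow> 'v \<Rightarrow> ('v \<Rightarrow> real) \<Rightarrow> bool" where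
  "kirchhoff_potentials N E L D s0 s1 p \<longleftrightarrow> p s1 = 0 \<and>
     (\<forall>v\<in>N. (\<Sum>u\<in>{u\<in>N. {u, v} \<in> E}. (p v - p u) / (L {u, v} / D {u, v})) = supply_vec s0 s1 v)"

definition physarum_trajectory ::
  "'v set \<Rightarrow> 'v set set \<Rightarrow> ('v set \<Rightarrow> real) \<Rightarrow> 'v \<Rightarrow> 'v \<Rightarrow>
   (real \<Rightarrow> 'v set \<Rightarrow> real) \<Rightarrow> (real \<Rightarrow> 'v \<Rightarrow> real) \<Rightarrow> bool" where
  "physarum_trajectory N E L s0 s1 D p \<longleftrightarrow>
     (\<forall>e\<in>E. D 0 e > 0) \<and>
     (\<forall>t\<ge>0. kirchhoff_potentials N E L (D t) s0 s1 (p t)) \<and>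
     (\<forall>t\<ge>0. \<forall>u v. {u, v} \<in> E \<longrightarrow>
        ((\<lambda>\<tau>. D \<tau> {u, v}) has_real_derivative
           (\<bar>D t {u, v} * (p t u - p t v) / L {u, v}\<bar> - D t {u, v})) (at t within {0..}))"

end

theory Submission
  imports Defs
begin

(* The proof is a Lyapunov-function argument.  Write Delta(t) = p(s0) - p(s1),
   C(t) = sum over edges of L_e D_e (the cost), F(t) = sum over edges of L_e |Q_e|
   (both counted once per orientation), and let L* be the shortest s0-s1 distance.
   Three static facts hold at every time: F >= 2 L* (pair the current with the
   distance-to-sink potential, which is 1-Lipschitz along edges), F^2 <= 2 Delta C
   (Cauchy-Schwarz against the energy identity 2 Delta = sum D (dp)^2 / L), and
   Delta is minimal among all unit flows (Thomson's principle).
   Along a fixed shortest path P put W = sum over P of L_e ln D_e and Phi = C/2 - W.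
   Then Phi >= L* and Phi' <= L* - (Delta + C/2)/2 <= 0, so Phi converges; in every
   time window of fixed length there is a time where Delta and C/2 are both close to
   L*.  Since D_e decays at most exponentially, these bounds propagate to all later
   times, pinching Delta(t) between L*^2/(L*+k) and L*+k for every k > 0. *)

section \<open>Real analysis on the half-line\<close>

lemma has_real_derivative_at_interior:
  assumes "(g has_real_derivative d) (at \<tau> within {0..})" "\<tau> > 0"
  shows "(g has_real_derivative d) (at \<tau>)"
proof -
  have "(g has_real_derivative d) (at \<tau> within {0<..})"
    by (rule DERIV_subset[OF assms(1)]) auto
  moreover have "at \<tau> within {0<..} = at \<tau>" using assms(2) by (intro at_within_open) auto
  ultimately show ?thesis by simp
qed

lemma mvt_half_line:
  assumes deriv: "\<forall>\<tau>\<ge>0. (g has_real_derivative g' \<tau>) (at \<tau> within {0..})"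
    and "0 \<le> a" "a < b"
  shows "\<exists>z. a < z \<and> z < b \<and> g b - g a = (b - a) * g' z"
proof -
  have "continuous_on {0..} g"
    using deriv DERIV_continuous by (meson atLeast_iff continuous_on_eq_continuous_within)
  hence cont: "continuous_on {a..b} g" by (rule continuous_on_subset) (use assms in auto)
  have interior: "(g has_real_derivative g' x) (at x)" if "a < x" for x
    using deriv assms that has_real_derivative_at_interior by auto
  hence "g differentiable at x" if "a < x" for x
    using that real_differentiable_def by blast
  from MVT[OF assms(3) cont this] obtain l z where
    z: "a < z" "z < b" "(g has_real_derivative l) (at z)" "g b - g a = (b - a) * l" by blast
  with interior[of z] have "l = g' z" using DERIV_unique by blast
  with z show ?thesis by blast
qed

lemma mono_half_line:
  assumes deriv: "\<forall>\<tau>\<ge>0. (g has_real_derivative g' \<tau>) (at \<tau> within {0..})"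
    and nonneg: "\<forall>\<tau>>0. g' \<tau> \<ge> 0" and "0 \<le> a" "a \<le> b"
  shows "g a \<le> g b"
proof (cases "a = b")
  case False
  then have "a < b" using assms by auto
  from mvt_half_line[OF deriv assms(3) this] obtain z where "a < z" "g b - g a = (b - a) * g' z"
    by blast
  moreover have "g' z \<ge> 0" using nonneg \<open>a < z\<close> \<open>0 \<le> a\<close> by auto
  ultimately show ?thesis using \<open>a < b\<close> mult_nonneg_nonneg[of "b - a" "g' z"] by linarith
qed simp

lemma weighted_cauchy_schwarz:
  fixes a b w :: "'a \<Rightarrow> real"
  assumes "\<forall>i\<in>I. w i > 0"
  shows "(\<Sum>i\<in>I. a i * b i)^2 \<le> (\<Sum>i\<in>I. (a i)^2 * w i) * (\<Sum>i\<in>I. (b i)^2 / w i)"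
proof -
  have 1: "(\<Sum>i\<in>I. a i * b i) = (\<Sum>i\<in>I. (a i * sqrt (w i)) * (b i / sqrt (w i)))"
    using assms by (intro sum.cong) auto
  have 2: "(\<Sum>i\<in>I. (a i)^2 * w i) = (\<Sum>i\<in>I. (a i * sqrt (w i))^2)"
    using assms by (intro sum.cong) (auto simp: power_mult_distrib)
  have 3: "(\<Sum>i\<in>I. (b i)^2 / w i) = (\<Sum>i\<in>I. (b i / sqrt (w i))^2)"
    using assms by (intro sum.cong) (auto simp: power_divide)
  show ?thesis unfolding 1 2 3 by (rule Cauchy_Schwarz_ineq_sum)
qed

text \<open>If two nonnegative numbers have product at least \<open>c\<^sup>2\<close> and sum at most \<open>2c + 2h\<close>,
  then each is close to \<open>c\<close> once \<open>h\<close> is small: this turns the bounds on \<open>\<Delta> + C/2\<close> into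
  bounds on \<open>\<Delta>\<close> and on \<open>C/2\<close> separately.\<close>
lemma pinch_by_product_and_sum:
  fixes c \<theta> :: real
  assumes "c \<ge> 0" "\<theta> > 0"
  obtains h where "h > 0"
    "\<And>y1 y2. 0 \<le> y1 \<Longrightarrow> 0 \<le> y2 \<Longrightarrow> c^2 \<le> y1 * y2 \<Longrightarrow> y1 + y2 \<le> 2 * c + 2 * h
       \<Longrightarrow> y1 \<le> c + \<theta>"
proof -
  define h where "h = min 1 (\<theta>^2 / (4 * (c + 1)))"
  have h0: "h > 0" using assms by (simp add: h_def)
  have "4 * h * (c + h) \<le> 4 * h * (c + 1)" using h0 by (intro mult_left_mono) (auto simp: h_def)
  also have "\<dots> \<le> 4 * (\<theta>^2 / (4 * (c + 1))) * (c + 1)"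
    using assms by (intro mult_right_mono) (auto simp: h_def)
  also have "\<dots> = \<theta>^2" using assms by (simp add: field_simps)
  finally have small: "4 * h * (c + h) \<le> \<theta>^2" .
  show ?thesis
  proof (rule that[OF h0])
    fix y1 y2 :: real
    assume y: "0 \<le> y1" "0 \<le> y2" "c^2 \<le> y1 * y2" "y1 + y2 \<le> 2 * c + 2 * h"
    have "y1 * y1 + c^2 \<le> y1 * (y1 + y2)" using y(3) by (simp add: algebra_simps)
    also have "\<dots> \<le> y1 * (2 * c + 2 * h)" using y by (intro mult_left_mono) auto
    finally have "(y1 - c)^2 \<le> 2 * h * y1" by (simp add: power2_eq_square algebra_simps)
    also have "\<dots> \<le> 2 * h * (2 * c + 2 * h)" using y h0 by (intro mult_left_mono) auto
    also have "\<dots> \<le> \<theta>^2" using small by (simp add: algebra_simps)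
    finally have "\<bar>y1 - c\<bar> \<le> \<bar>\<theta>\<bar>" using abs_le_square_iff by blast
    then show "y1 \<le> c + \<theta>" using assms by simp
  qed
qed

lemma small_multiplicative_margin:
  fixes c k :: real
  assumes "c \<ge> 0" "k > 0"
  obtains \<theta> where "\<theta> > 0" "(1 + \<theta>) * (c + \<theta>) \<le> c + k"
proof -
  define \<theta> where "\<theta> = min 1 (k / (2 + c))"
  have \<theta>0: "\<theta> > 0" using assms by (simp add: \<theta>_def)
  have "\<theta> * (2 + c) \<le> k / (2 + c) * (2 + c)"
    using assms by (intro mult_right_mono) (auto simp: \<theta>_def)
  hence "\<theta> * (2 + c) \<le> k" using assms by simp
  moreover have "\<theta> * (1 + c + \<theta>) \<le> \<theta> * (2 + c)" using \<theta>0 by (intro mult_left_mono) (auto simp: \<theta>_def)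
  ultimately have "(1 + \<theta>) * (c + \<theta>) \<le> c + k" by (simp add: algebra_simps)
  with \<theta>0 show ?thesis by (rule that)
qed

lemma tendsto_by_pinching:
  fixes f :: "real \<Rightarrow> real"
  assumes "c \<ge> 0" and bounds: "\<forall>k>0. \<exists>T. \<forall>t\<ge>T. f t \<le> c + k \<and> c^2 \<le> f t * (c + k)"
  shows "(f \<longlongrightarrow> c) at_top"
proof (rule tendstoI)
  fix e :: real assume e: "e > 0"
  obtain T where T: "\<forall>t\<ge>T. f t \<le> c + e/2 \<and> c^2 \<le> f t * (c + e/2)"
    using bounds e by (meson half_gt_zero)
  have "dist (f t) c < e" if "t \<ge> T" for t
  proof -
    from T that have upper: "f t \<le> c + e/2" and lower: "c^2 \<le> f t * (c + e/2)" by auto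
    have "(c - e/2) * (c + e/2) \<le> c^2" by (simp add: algebra_simps power2_eq_square)
    with lower have "(c - e/2) * (c + e/2) \<le> f t * (c + e/2)" by linarith
    moreover have "c + e/2 > 0" using assms(1) e by simp
    ultimately have "c - e/2 \<le> f t" by (simp add: mult_le_cancel_right)
    with upper e show ?thesis by (simp add: dist_real_def abs_less_iff)
  qed
  then show "eventually (\<lambda>t. dist (f t) c < e) at_top" by (auto simp: eventually_at_top_linorder)
qed

locale physarum =
  fixes N :: "'v set" and E :: "'v set set" and L :: "'v set \<Rightarrow> real"
    and s0 s1 :: 'v
    and D :: "real \<Rightarrow> 'v set \<Rightarrow> real" and p :: "real \<Rightarrow> 'v \<Rightarrow> real"
  assumes graph: "undirected_graph N E" and connected: "connected_graph N E"
    and s0_in: "s0 \<in> N" and s1_in: "s1 \<in> N" and s0_ne_s1: "s0 \<noteq> s1"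
    and L_pos: "\<forall>e\<in>E. L e > 0"
    and trajectory: "physarum_trajectory N E L s0 s1 D p"
begin

lemma finite_N: "finite N" using graph by (simp add: undirected_graph_def)

lemma edge_endpoints: "{x, y} \<in> E \<Longrightarrow> x \<in> N \<and> y \<in> N \<and> x \<noteq> y"
proof -
  assume "{x, y} \<in> E"
  then obtain u v where "{x, y} = {u, v}" "u \<in> N" "v \<in> N" "u \<noteq> v"
    using graph unfolding undirected_graph_def by blast
  then show ?thesis by (metis doubleton_eq_iff insert_absorb2 insert_iff singleton_insert_inj_eq)
qed

lemma edge_length_pos: "{x, y} \<in> E \<Longrightarrow> L {x, y} > 0" using L_pos by auto

lemma kirchhoff: "t \<ge> 0 \<Longrightarrow> kirchhoff_potentials N E L (D t) s0 s1 (p t)"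
  using trajectory by (simp add: physarum_trajectory_def)

lemma diameter_deriv: "t \<ge> 0 \<Longrightarrow> {u, v} \<in> E \<Longrightarrow>
  ((\<lambda>\<tau>. D \<tau> {u, v}) has_real_derivative
     (\<bar>D t {u, v} * (p t u - p t v) / L {u, v}\<bar> - D t {u, v})) (at t within {0..})"
  using trajectory by (simp add: physarum_trajectory_def)

text \<open>Since \<open>D' \<ge> -D\<close>, the function \<open>e\<^sup>t D(t)\<close> is nondecreasing.\<close>
lemma diameter_growth:
  assumes "{u, v} \<in> E" "0 \<le> s" "s \<le> t"
  shows "D s {u, v} \<le> exp (t - s) * D t {u, v}"
proof -
  let ?y = "\<lambda>\<tau>. exp \<tau> * D \<tau> {u, v}"
  let ?y' = "\<lambda>\<tau>. exp \<tau> * D \<tau> {u, v} +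
    (\<bar>D \<tau> {u, v} * (p \<tau> u - p \<tau> v) / L {u, v}\<bar> - D \<tau> {u, v}) * exp \<tau>"
  have "\<forall>\<tau>\<ge>0. (?y has_real_derivative ?y' \<tau>) (at \<tau> within {0..})"
  proof (intro allI impI)
    fix \<tau> :: real assume "\<tau> \<ge> 0"
    show "(?y has_real_derivative ?y' \<tau>) (at \<tau> within {0..})"
      by (rule DERIV_mult[OF DERIV_exp[THEN DERIV_subset] diameter_deriv[OF \<open>\<tau> \<ge> 0\<close> assms(1)]])
        simp
  qed
  moreover have "\<forall>\<tau>>0. ?y' \<tau> \<ge> 0" by (auto simp: algebra_simps)
  ultimately have "exp s * D s {u, v} \<le> exp t * D t {u, v}" using assms(2,3) by (rule mono_half_line)
  hence "exp (-s) * (exp s * D s {u, v}) \<le> exp (-s) * (exp t * D t {u, v})" by simp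
  thus ?thesis by (simp add: mult.assoc[symmetric] exp_add[symmetric])
qed

lemma diameter_pos: assumes "e \<in> E" "t \<ge> 0" shows "D t e > 0"
proof -
  obtain u v where e: "e = {u, v}" using assms(1) graph unfolding undirected_graph_def by blast
  have "0 < D 0 e" using trajectory assms(1) by (simp add: physarum_trajectory_def)
  also have "\<dots> \<le> exp t * D t e" using diameter_growth[of u v 0 t] assms e by simp
  finally show ?thesis by (simp add: zero_less_mult_iff)
qed

text \<open>Sums over edges are taken over both orientations; \<open>arcs\<close> is the set of oriented edges.\<close>
definition arcs :: "('v \<times> 'v) set" where "arcs = (SIGMA v:N. {u\<in>N. {u, v} \<in> E})"

definition arc_edge :: "'v \<times> 'v \<Rightarrow> 'v set" where "arc_edge x = {fst x, snd x}"

lemma arc_iff: "x \<in> arcs \<longleftrightarrow> arc_edge x \<in> E"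
  unfolding arcs_def arc_edge_def by (cases x) (auto simp: insert_commute dest: edge_endpoints)

lemma finite_arcs: "finite arcs" unfolding arcs_def using finite_N by auto

lemma arc_edge_swap [simp]: "arc_edge (prod.swap x) = arc_edge x"
  by (cases x) (auto simp: arc_edge_def insert_commute)

lemma sum_arcs_swap: "(\<Sum>x\<in>arcs. g x) = (\<Sum>x\<in>arcs. g (prod.swap x))"
  by (rule sum.reindex_bij_witness[of _ prod.swap prod.swap]) (auto simp: arc_iff)

lemma sum_arcs_by_tail: "(\<Sum>x\<in>arcs. g x) = (\<Sum>v\<in>N. \<Sum>u\<in>{u\<in>N. {u, v} \<in> E}. g (v, u))"
  unfolding arcs_def using finite_N by (subst sum.Sigma) auto

lemma arc_diameter_pos: "x \<in> arcs \<Longrightarrow> t \<ge> 0 \<Longrightarrow> D t (arc_edge x) > 0"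
  using diameter_pos arc_iff by blast

lemma arc_length_pos: "x \<in> arcs \<Longrightarrow> L (arc_edge x) > 0"
  using L_pos arc_iff by blast

lemma path_edge: "is_path E a b ps \<Longrightarrow> i < length ps - 1 \<Longrightarrow> {ps ! i, ps ! Suc i} \<in> E"
  by (auto simp: is_path_def)

lemma path_vertices: assumes "is_path E a b ps" "b \<in> N" shows "set ps \<subseteq> N"
proof
  fix x assume "x \<in> set ps"
  then obtain i where i: "i < length ps" "x = ps ! i" by (auto simp: in_set_conv_nth)
  show "x \<in> N"
  proof (cases "i < length ps - 1")
    case True
    then show ?thesis using path_edge[OF assms(1)] edge_endpoints i by blast
  next
    case False
    then have "i = length ps - 1" using i by auto
    then have "x = last ps" using i assms(1) by (auto simp: is_path_def last_conv_nth)
    then show ?thesis using assms by (auto simp: is_path_def)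
  qed
qed

text \<open>Paths are distinct vertex lists, so there are only finitely many.\<close>
lemma finite_paths: assumes "b \<in> N" shows "finite {ps. is_path E a b ps}"
proof (rule finite_subset)
  show "{ps. is_path E a b ps} \<subseteq> {xs. set xs \<subseteq> N \<and> length xs \<le> card N}"
  proof
    fix ps assume "ps \<in> {ps. is_path E a b ps}"
    hence path: "is_path E a b ps" by simp
    have "set ps \<subseteq> N" using path_vertices[OF path assms] .
    moreover from this have "card (set ps) \<le> card N" using finite_N by (intro card_mono)
    ultimately show "ps \<in> {xs. set xs \<subseteq> N \<and> length xs \<le> card N}"
      using path by (auto simp: is_path_def distinct_card)
  qed
  show "finite {xs. set xs \<subseteq> N \<and> length xs \<le> card N}"
    using finite_N finite_lists_length_le by blast
qed

lemma shortest_path_le: "is_path E a b ps \<Longrightarrow> b \<in> N \<Longrightarrow>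
  shortest_path_length E L a b \<le> path_length L ps"
  unfolding shortest_path_length_def using finite_paths by (intro Min_le) auto

lemma shortest_path_exists: assumes "a \<in> N" "b \<in> N"
  shows "\<exists>ps. is_path E a b ps \<and> path_length L ps = shortest_path_length E L a b"
proof -
  have "{ps. is_path E a b ps} \<noteq> {}" using connected assms by (auto simp: connected_graph_def)
  hence "shortest_path_length E L a b \<in> path_length L ` {ps. is_path E a b ps}"
    unfolding shortest_path_length_def using finite_paths[OF assms(2)] by (intro Min_in) auto
  thus ?thesis by auto
qed

lemma path_length_nonneg: assumes "is_path E a b ps" shows "path_length L ps \<ge> 0"
  unfolding path_length_def using edge_length_pos path_edge[OF assms]
  by (intro sum_nonneg) (auto intro: less_imp_le)

lemma path_cons: assumes "is_path E v b ps" "{u, v} \<in> E" "u \<notin> set ps"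
  shows "is_path E u b (u # ps) \<and> path_length L (u # ps) = L {u, v} + path_length L ps"
proof -
  have ne: "ps \<noteq> []" and hd: "ps ! 0 = v" using assms(1) by (auto simp: is_path_def hd_conv_nth)
  then obtain n where n: "length ps = Suc n" by (cases ps) auto
  have "is_path E u b (u # ps)"
    unfolding is_path_def
  proof (intro conjI allI impI)
    fix i assume "i < length (u # ps) - 1"
    then show "{(u # ps) ! i, (u # ps) ! Suc i} \<in> E"
      using assms(1,2) hd by (cases i) (auto simp: is_path_def)
  qed (use assms ne in \<open>auto simp: is_path_def\<close>)
  moreover have "path_length L (u # ps) = L {u, v} + path_length L ps"
  proof -
    have "path_length L (u # ps) = (\<Sum>i<Suc n. L {(u # ps) ! i, (u # ps) ! Suc i})"
      by (simp add: path_length_def n)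
    also have "\<dots> = L {u, ps ! 0} + (\<Sum>i<n. L {ps ! i, ps ! Suc i})"
      by (subst sum.lessThan_Suc_shift) simp
    finally show ?thesis using hd n by (simp add: path_length_def)
  qed
  ultimately show ?thesis by blast
qed

lemma path_drop: assumes "is_path E a b ps" "k < length ps"
  shows "is_path E (ps ! k) b (drop k ps) \<and> path_length L (drop k ps) \<le> path_length L ps"
proof -
  have path: "is_path E (ps ! k) b (drop k ps)"
    using assms by (auto simp: is_path_def hd_drop_conv_nth)
  define n where "n = length ps - 1"
  have split: "(\<Sum>i<k + m. f i) = (\<Sum>i<k. f i) + (\<Sum>i<m. f (k + i))" for f :: "nat \<Rightarrow> real" and m
    by (induction m) auto
  have "path_length L ps = (\<Sum>i<k + (n - k). L {ps ! i, ps ! Suc i})"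
    unfolding path_length_def n_def[symmetric] using assms n_def by simp
  also have "\<dots> = (\<Sum>i<k. L {ps ! i, ps ! Suc i}) + path_length L (drop k ps)"
    unfolding split path_length_def n_def using assms by simp
  finally have "path_length L ps = (\<Sum>i<k. L {ps ! i, ps ! Suc i}) + path_length L (drop k ps)" .
  moreover have "(\<Sum>i<k. L {ps ! i, ps ! Suc i}) \<ge> 0"
    using edge_length_pos path_edge[OF assms(1)] assms(2)
    by (intro sum_nonneg) (auto intro: less_imp_le)
  ultimately show ?thesis using path by simp
qed

text \<open>The distance to the sink; as a vertex potential it certifies the lower bound
  \<open>flux \<ge> 2 L*\<close>.\<close>
definition dist_to_sink :: "'v \<Rightarrow> real" where
  "dist_to_sink v = shortest_path_length E L v s1"

abbreviation L_opt :: real where "L_opt \<equiv> shortest_path_length E L s0 s1"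

lemma dist_to_sink_s1: "dist_to_sink s1 = 0"
proof -
  have "is_path E s1 s1 [s1]" by (simp add: is_path_def)
  hence "dist_to_sink s1 \<le> 0"
    using shortest_path_le[of s1 s1 "[s1]"] s1_in by (simp add: dist_to_sink_def path_length_def)
  moreover obtain ps where "is_path E s1 s1 ps" "path_length L ps = dist_to_sink s1"
    using shortest_path_exists[OF s1_in s1_in] by (auto simp: dist_to_sink_def)
  ultimately show ?thesis using path_length_nonneg by force
qed

text \<open>Triangle inequality along an edge: prepend the edge to a shortest path from its
  other endpoint, or cut that path at the vertex if it already passes through it.\<close>
lemma dist_to_sink_edge: assumes "{u, v} \<in> E" shows "dist_to_sink u \<le> L {u, v} + dist_to_sink v"
proof -
  have uv: "u \<in> N" "v \<in> N" using edge_endpoints[OF assms] by auto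
  obtain ps where ps: "is_path E v s1 ps" "path_length L ps = dist_to_sink v"
    using shortest_path_exists[OF uv(2) s1_in] by (auto simp: dist_to_sink_def)
  show ?thesis
  proof (cases "u \<in> set ps")
    case False
    from path_cons[OF ps(1) assms False] show ?thesis
      using shortest_path_le[of u s1 "u # ps"] s1_in ps(2) unfolding dist_to_sink_def by simp
  next
    case True
    then obtain k where k: "k < length ps" "ps ! k = u" by (auto simp: in_set_conv_nth)
    from path_drop[OF ps(1) k(1)] k have "dist_to_sink u \<le> dist_to_sink v"
      using shortest_path_le[of u s1 "drop k ps"] s1_in ps(2) unfolding dist_to_sink_def by auto
    then show ?thesis using edge_length_pos[OF assms] by linarith
  qed
qed

lemma dist_to_sink_lipschitz: assumes "{u, v} \<in> E"
  shows "\<bar>dist_to_sink u - dist_to_sink v\<bar> \<le> L {u, v}"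
  using dist_to_sink_edge[OF assms] dist_to_sink_edge[of v u] assms by (auto simp: insert_commute)

section \<open>Static facts about the electrical flow\<close>

definition pot_diff :: "real \<Rightarrow> 'v \<times> 'v \<Rightarrow> real" where
  "pot_diff t x = p t (fst x) - p t (snd x)"

definition current :: "real \<Rightarrow> 'v \<times> 'v \<Rightarrow> real" where
  "current t x = D t (arc_edge x) * pot_diff t x / L (arc_edge x)"

definition Delta :: "real \<Rightarrow> real" where "Delta t = p t s0 - p t s1"

text \<open>Length-weighted total current, \<open>\<Sum> L |Q|\<close>, over both orientations.\<close>
definition flux :: "real \<Rightarrow> real" where
  "flux t = (\<Sum>x\<in>arcs. D t (arc_edge x) * \<bar>pot_diff t x\<bar>)"

definition cost :: "real \<Rightarrow> real" where
  "cost t = (\<Sum>x\<in>arcs. L (arc_edge x) * D t (arc_edge x))"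

definition unit_flow :: "('v \<times> 'v \<Rightarrow> real) \<Rightarrow> bool" where
  "unit_flow f \<longleftrightarrow> (\<forall>x\<in>arcs. f (prod.swap x) = - f x) \<and>
     (\<forall>v\<in>N. (\<Sum>u\<in>{u\<in>N. {u, v} \<in> E}. f (v, u)) = supply_vec s0 s1 v)"

lemma sum_supply: "(\<Sum>v\<in>N. g v * supply_vec s0 s1 v) = g s0 - g s1"
proof -
  have "(\<Sum>v\<in>N. g v * supply_vec s0 s1 v) =
    (\<Sum>v\<in>N. (if v = s0 then g v else 0)) - (\<Sum>v\<in>N. (if v = s1 then g v else 0))"
    unfolding sum_subtractf[symmetric] using s0_ne_s1 by (intro sum.cong) (auto simp: supply_vec_def)
  also have "\<dots> = g s0 - g s1" using finite_N s0_in s1_in by (simp add: sum.delta)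
  finally show ?thesis .
qed

text \<open>Pairing a unit flow with the differences of any potential \<open>g\<close> yields
  \<open>g(s0) - g(s1)\<close> (counted twice, once per orientation): summation by parts.\<close>
lemma unit_flow_pairing: assumes "unit_flow f"
  shows "(\<Sum>x\<in>arcs. f x * (g (fst x) - g (snd x))) = 2 * (g s0 - g s1)"
proof -
  have tails: "(\<Sum>x\<in>arcs. f x * g (fst x)) = g s0 - g s1"
  proof -
    have "(\<Sum>x\<in>arcs. f x * g (fst x)) = (\<Sum>v\<in>N. g v * (\<Sum>u\<in>{u\<in>N. {u, v} \<in> E}. f (v, u)))"
      by (subst sum_arcs_by_tail) (simp add: sum_distrib_left mult.commute)
    also have "\<dots> = (\<Sum>v\<in>N. g v * supply_vec s0 s1 v)"
      using assms by (intro sum.cong) (auto simp: unit_flow_def)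
    finally show ?thesis using sum_supply by simp
  qed
  have heads: "(\<Sum>x\<in>arcs. f x * g (snd x)) = - (\<Sum>x\<in>arcs. f x * g (fst x))"
  proof -
    have "(\<Sum>x\<in>arcs. f x * g (snd x)) = (\<Sum>x\<in>arcs. f (prod.swap x) * g (fst x))"
      by (subst sum_arcs_swap) simp
    also have "\<dots> = (\<Sum>x\<in>arcs. - (f x * g (fst x)))"
      using assms by (intro sum.cong) (auto simp: unit_flow_def)
    finally show ?thesis by (simp add: sum_negf)
  qed
  show ?thesis using tails heads by (simp add: algebra_simps sum_subtractf)
qed

text \<open>Kirchhoff's law says precisely that the current is a unit flow.\<close>
lemma current_unit_flow: assumes "t \<ge> 0" shows "unit_flow (current t)"
  unfolding unit_flow_def
proof (intro conjI ballI)
  fix x assume "x \<in> arcs"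
  show "current t (prod.swap x) = - current t x"
    unfolding current_def pot_diff_def
    by (cases x) (simp add: arc_edge_def insert_commute minus_divide_left right_diff_distrib)
next
  fix v assume v: "v \<in> N"
  have "(\<Sum>u\<in>{u\<in>N. {u, v} \<in> E}. current t (v, u)) =
     (\<Sum>u\<in>{u\<in>N. {u, v} \<in> E}. (p t v - p t u) / (L {u, v} / D t {u, v}))"
    unfolding current_def pot_diff_def arc_edge_def by (intro sum.cong) (auto simp: insert_commute)
  also have "\<dots> = supply_vec s0 s1 v"
    using kirchhoff[OF assms] v by (simp add: kirchhoff_potentials_def)
  finally show "(\<Sum>u\<in>{u\<in>N. {u, v} \<in> E}. current t (v, u)) = supply_vec s0 s1 v" .
qed

lemma energy_identity: assumes "t \<ge> 0"
  shows "(\<Sum>x\<in>arcs. D t (arc_edge x) * (pot_diff t x)^2 / L (arc_edge x)) = 2 * Delta t"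
proof -
  have "(\<Sum>x\<in>arcs. D t (arc_edge x) * (pot_diff t x)^2 / L (arc_edge x)) =
        (\<Sum>x\<in>arcs. current t x * (p t (fst x) - p t (snd x)))"
    unfolding current_def pot_diff_def by (intro sum.cong) (auto simp: power2_eq_square)
  also have "\<dots> = 2 * Delta t" using unit_flow_pairing[OF current_unit_flow[OF assms]]
    by (simp add: Delta_def)
  finally show ?thesis .
qed

lemma Delta_nonneg: assumes "t \<ge> 0" shows "Delta t \<ge> 0"
proof -
  have "(\<Sum>x\<in>arcs. D t (arc_edge x) * (pot_diff t x)^2 / L (arc_edge x)) \<ge> 0"
    using arc_diameter_pos[OF _ assms] arc_length_pos by (intro sum_nonneg) (simp add: less_imp_le)
  thus ?thesis using energy_identity[OF assms] by simp
qed

lemma thomson_principle: assumes "t \<ge> 0" "unit_flow f"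
  shows "2 * Delta t \<le> (\<Sum>x\<in>arcs. L (arc_edge x) * (f x)^2 / D t (arc_edge x))"
proof -
  let ?energy = "\<Sum>x\<in>arcs. L (arc_edge x) * (f x)^2 / D t (arc_edge x)"
  have pairing: "2 * Delta t = (\<Sum>x\<in>arcs. f x * pot_diff t x)"
    using unit_flow_pairing[OF assms(2), of "p t"] by (simp add: Delta_def pot_diff_def)
  have w: "\<forall>x\<in>arcs. L (arc_edge x) / D t (arc_edge x) > 0"
    using arc_diameter_pos arc_length_pos assms by auto
  have "(\<Sum>x\<in>arcs. f x * pot_diff t x)^2 \<le>
          (\<Sum>x\<in>arcs. (f x)^2 * (L (arc_edge x) / D t (arc_edge x))) *
          (\<Sum>x\<in>arcs. (pot_diff t x)^2 / (L (arc_edge x) / D t (arc_edge x)))"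
    by (rule weighted_cauchy_schwarz[OF w])
  also have "(\<Sum>x\<in>arcs. (f x)^2 * (L (arc_edge x) / D t (arc_edge x))) = ?energy"
    by (intro sum.cong) auto
  also have "(\<Sum>x\<in>arcs. (pot_diff t x)^2 / (L (arc_edge x) / D t (arc_edge x))) = 2 * Delta t"
    using energy_identity[OF assms(1)] by (simp add: mult.commute)
  finally have "(2 * Delta t)^2 \<le> ?energy * (2 * Delta t)" using pairing by simp
  moreover have "?energy \<ge> 0"
    using arc_diameter_pos[OF _ assms(1)] arc_length_pos by (intro sum_nonneg) (simp add: less_imp_le)
  moreover have "Delta t \<ge> 0" using Delta_nonneg assms by simp
  ultimately show ?thesis by (cases "Delta t = 0") (auto simp: power2_eq_square)
qed

text \<open>Lower bound on the flux: pair the current with the distance to the sink.\<close>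
lemma flux_lower: assumes "t \<ge> 0"
  shows "2 * L_opt \<le> flux t"
proof -
  have "2 * L_opt = (\<Sum>x\<in>arcs. current t x * (dist_to_sink (fst x) - dist_to_sink (snd x)))"
    using unit_flow_pairing[OF current_unit_flow[OF assms], of dist_to_sink] dist_to_sink_s1
    by (simp add: dist_to_sink_def)
  also have "\<dots> \<le> flux t" unfolding flux_def
  proof (rule sum_mono)
    fix x assume x: "x \<in> arcs"
    have "current t x * (dist_to_sink (fst x) - dist_to_sink (snd x)) \<le>
          \<bar>current t x\<bar> * \<bar>dist_to_sink (fst x) - dist_to_sink (snd x)\<bar>"
      by (metis abs_ge_self abs_mult)
    also have "\<dots> \<le> \<bar>current t x\<bar> * L (arc_edge x)"
      using dist_to_sink_lipschitz[of "fst x" "snd x"] x arc_iff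
      by (intro mult_left_mono) (auto simp: arc_edge_def)
    also have "\<dots> = D t (arc_edge x) * \<bar>pot_diff t x\<bar>"
      using arc_diameter_pos[OF x assms] arc_length_pos[OF x] by (simp add: current_def abs_mult)
    finally show "current t x * (dist_to_sink (fst x) - dist_to_sink (snd x)) \<le>
                  D t (arc_edge x) * \<bar>pot_diff t x\<bar>" .
  qed
  finally show ?thesis .
qed

text \<open>Upper bound on the flux by Cauchy--Schwarz against the energy identity.\<close>
lemma flux_upper: assumes "t \<ge> 0" shows "(flux t)^2 \<le> 2 * Delta t * cost t"
proof -
  have w: "\<forall>x\<in>arcs. D t (arc_edge x) / L (arc_edge x) > 0"
    using arc_diameter_pos arc_length_pos assms by auto
  have "(flux t)^2 = (\<Sum>x\<in>arcs. \<bar>pot_diff t x\<bar> * D t (arc_edge x))^2"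
    by (simp add: flux_def mult.commute)
  also have "\<dots> \<le> (\<Sum>x\<in>arcs. \<bar>pot_diff t x\<bar>^2 * (D t (arc_edge x) / L (arc_edge x))) *
                  (\<Sum>x\<in>arcs. (D t (arc_edge x))^2 / (D t (arc_edge x) / L (arc_edge x)))"
    by (rule weighted_cauchy_schwarz[OF w])
  also have "(\<Sum>x\<in>arcs. \<bar>pot_diff t x\<bar>^2 * (D t (arc_edge x) / L (arc_edge x))) = 2 * Delta t"
    using energy_identity[OF assms] by (simp add: mult.commute)
  also have "(\<Sum>x\<in>arcs. (D t (arc_edge x))^2 / (D t (arc_edge x) / L (arc_edge x))) = cost t"
    unfolding cost_def using w by (intro sum.cong) (auto simp: power2_eq_square)
  finally show ?thesis .
qed

lemma cost_nonneg: "t \<ge> 0 \<Longrightarrow> cost t \<ge> 0"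
  unfolding cost_def using arc_diameter_pos arc_length_pos
  by (intro sum_nonneg) (auto intro!: mult_nonneg_nonneg less_imp_le)

section \<open>Dynamics of the cost and the potential difference\<close>

lemma cost_deriv: assumes "t \<ge> 0"
  shows "(cost has_real_derivative (flux t - cost t)) (at t within {0..})"
proof -
  have "(cost has_real_derivative
        (\<Sum>x\<in>arcs. L (arc_edge x) * (\<bar>D t (arc_edge x) * pot_diff t x / L (arc_edge x)\<bar>
                                       - D t (arc_edge x)))) (at t within {0..})"
    unfolding cost_def
  proof (rule DERIV_sum)
    fix x assume x: "x \<in> arcs"
    obtain a b where ab: "x = (a, b)" by (cases x)
    have "{a, b} \<in> E" using x ab arc_iff arc_edge_def by auto
    from DERIV_cmult[OF diameter_deriv[OF assms this], of "L {a, b}"]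
    show "((\<lambda>\<tau>. L (arc_edge x) * D \<tau> (arc_edge x)) has_real_derivative
           L (arc_edge x) * (\<bar>D t (arc_edge x) * pot_diff t x / L (arc_edge x)\<bar> - D t (arc_edge x)))
          (at t within {0..})"
      by (simp add: ab arc_edge_def pot_diff_def)
  qed
  also have "(\<Sum>x\<in>arcs. L (arc_edge x) * (\<bar>D t (arc_edge x) * pot_diff t x / L (arc_edge x)\<bar>
                                           - D t (arc_edge x))) = flux t - cost t"
    unfolding flux_def cost_def sum_subtractf[symmetric]
  proof (intro sum.cong refl)
    fix x assume x: "x \<in> arcs"
    have "L (arc_edge x) > 0" "D t (arc_edge x) > 0"
      using arc_diameter_pos[OF x assms] arc_length_pos[OF x] by auto
    thus "L (arc_edge x) * (\<bar>D t (arc_edge x) * pot_diff t x / L (arc_edge x)\<bar> - D t (arc_edge x)) =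
          D t (arc_edge x) * \<bar>pot_diff t x\<bar> - L (arc_edge x) * D t (arc_edge x)"
      by (simp add: abs_mult right_diff_distrib)
  qed
  finally show ?thesis .
qed

lemma cost_growth: assumes "0 \<le> s" "s \<le> t" shows "cost s \<le> exp (t - s) * cost t"
  unfolding cost_def sum_distrib_left
proof (rule sum_mono)
  fix x assume x: "x \<in> arcs"
  have "{fst x, snd x} \<in> E" using x arc_iff by (simp add: arc_edge_def)
  from diameter_growth[OF this assms] arc_length_pos[OF x]
  show "L (arc_edge x) * D s (arc_edge x) \<le> exp (t - s) * (L (arc_edge x) * D t (arc_edge x))"
    by (simp add: arc_edge_def mult.left_commute)
qed

text \<open>The potential difference grows at most exponentially: by Thomson's principle,
  the old current is an admissible flow for the new, at most \<open>e\<^sup>t\<^sup>-\<^sup>s\<close> times more resistive,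
  network.\<close>
lemma Delta_growth: assumes "0 \<le> s" "s \<le> t" shows "Delta t \<le> exp (t - s) * Delta s"
proof -
  have "2 * Delta t \<le> (\<Sum>x\<in>arcs. L (arc_edge x) * (current s x)^2 / D t (arc_edge x))"
    using thomson_principle[OF _ current_unit_flow] assms by auto
  also have "\<dots> \<le> (\<Sum>x\<in>arcs. exp (t - s) * (D s (arc_edge x) * (pot_diff s x)^2 / L (arc_edge x)))"
  proof (rule sum_mono)
    fix x assume x: "x \<in> arcs"
    have ds: "D s (arc_edge x) > 0" and dt: "D t (arc_edge x) > 0" and lp: "L (arc_edge x) > 0"
      using arc_diameter_pos[OF x] arc_length_pos[OF x] assms by auto
    have "{fst x, snd x} \<in> E" using x arc_iff by (simp add: arc_edge_def)
    from diameter_growth[OF this assms]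
    have "1 / D t (arc_edge x) \<le> exp (t - s) / D s (arc_edge x)"
      using ds dt by (simp add: arc_edge_def field_simps)
    hence "(L (arc_edge x) * (current s x)^2) * (1 / D t (arc_edge x)) \<le>
           (L (arc_edge x) * (current s x)^2) * (exp (t - s) / D s (arc_edge x))"
      using lp by (intro mult_left_mono) auto
    also have "\<dots> = exp (t - s) * (D s (arc_edge x) * (pot_diff s x)^2 / L (arc_edge x))"
      using ds lp by (simp add: current_def power2_eq_square field_simps)
    finally show "L (arc_edge x) * (current s x)^2 / D t (arc_edge x) \<le>
                  exp (t - s) * (D s (arc_edge x) * (pot_diff s x)^2 / L (arc_edge x))" by simp
  qed
  also have "\<dots> = exp (t - s) * (2 * Delta s)"
    using energy_identity[of s] assms by (simp only: sum_distrib_left[symmetric])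
  finally show ?thesis by simp
qed

section \<open>A Lyapunov function\<close>

definition opt_path :: "'v list" where
  "opt_path = (SOME ps. is_path E s0 s1 ps \<and> path_length L ps = L_opt)"

lemma opt_path: "is_path E s0 s1 opt_path" "path_length L opt_path = L_opt"
proof -
  have "\<exists>ps. is_path E s0 s1 ps \<and> path_length L ps = L_opt"
    using shortest_path_exists[OF s0_in s1_in] .
  from someI_ex[OF this] show "is_path E s0 s1 opt_path" "path_length L opt_path = L_opt"
    by (auto simp: opt_path_def)
qed

definition opt_size :: nat where "opt_size = length opt_path - 1"
definition opt_edge :: "nat \<Rightarrow> 'v set" where "opt_edge i = {opt_path ! i, opt_path ! Suc i}"

lemma opt_edge_in_E: "i < opt_size \<Longrightarrow> opt_edge i \<in> E"
  using path_edge[OF opt_path(1)] by (simp add: opt_edge_def opt_size_def)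

lemma sum_opt_edges: "(\<Sum>i<opt_size. L (opt_edge i)) = L_opt"
  using opt_path(2) by (simp add: path_length_def opt_size_def opt_edge_def)

lemma L_opt_nonneg: "L_opt \<ge> 0"
  using path_length_nonneg[OF opt_path(1)] opt_path(2) by simp

text \<open>Both orientations of the edges of the shortest path are distinct arcs, so their
  contributions to a nonnegative sum over arcs are counted twice.\<close>
lemma opt_path_arcs_le:
  fixes g :: "'v \<times> 'v \<Rightarrow> real" assumes "\<forall>x\<in>arcs. g x \<ge> 0"
  shows "(\<Sum>i<opt_size. g (opt_path ! i, opt_path ! Suc i) + g (opt_path ! Suc i, opt_path ! i))
         \<le> (\<Sum>x\<in>arcs. g x)"
proof -
  define fwd where "fwd i = (opt_path ! i, opt_path ! Suc i)" for i
  define bwd where "bwd i = (opt_path ! Suc i, opt_path ! i)" for i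
  have dist: "distinct opt_path" using opt_path(1) by (simp add: is_path_def)
  have len: "Suc i < length opt_path" if "i < opt_size" for i using that by (simp add: opt_size_def)
  have inj_fwd: "inj_on fwd {..<opt_size}"
    unfolding inj_on_def fwd_def using dist len by (auto simp: nth_eq_iff_index_eq)
  have inj_bwd: "inj_on bwd {..<opt_size}"
    unfolding inj_on_def bwd_def using dist len by (auto simp: nth_eq_iff_index_eq)
  have "fwd i \<noteq> bwd j" if "i < opt_size" "j < opt_size" for i j
  proof
    assume "fwd i = bwd j"
    then have "opt_path ! i = opt_path ! Suc j" by (auto simp: fwd_def bwd_def)
    then have "i = Suc j" using len[OF that(1)] len[OF that(2)] nth_eq_iff_index_eq[OF dist] by auto
    with \<open>fwd i = bwd j\<close> show False
      using len[OF that(1)] nth_eq_iff_index_eq[OF dist] by (auto simp: fwd_def bwd_def)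
  qed
  then have disjoint: "fwd ` {..<opt_size} \<inter> bwd ` {..<opt_size} = {}" by fastforce
  have in_arcs: "fwd ` {..<opt_size} \<union> bwd ` {..<opt_size} \<subseteq> arcs"
    using opt_edge_in_E arc_iff by (auto simp: fwd_def bwd_def arc_edge_def opt_edge_def insert_commute)
  have "(\<Sum>i<opt_size. g (fwd i) + g (bwd i)) = sum g (fwd ` {..<opt_size}) + sum g (bwd ` {..<opt_size})"
    by (simp add: sum.distrib sum.reindex[OF inj_fwd] sum.reindex[OF inj_bwd])
  also have "\<dots> = sum g (fwd ` {..<opt_size} \<union> bwd ` {..<opt_size})"
    by (rule sum.union_disjoint[symmetric]) (use disjoint in auto)
  also have "\<dots> \<le> sum g arcs" using in_arcs assms by (intro sum_mono2 finite_arcs) auto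
  finally show ?thesis by (simp add: fwd_def bwd_def)
qed

definition log_weight :: "real \<Rightarrow> real" where
  "log_weight t = (\<Sum>i<opt_size. L (opt_edge i) * ln (D t (opt_edge i)))"

definition log_weight_rate :: "real \<Rightarrow> real" where
  "log_weight_rate t = (\<Sum>i<opt_size. \<bar>p t (opt_path ! i) - p t (opt_path ! Suc i)\<bar> - L (opt_edge i))"

lemma log_weight_deriv: assumes "t \<ge> 0"
  shows "(log_weight has_real_derivative log_weight_rate t) (at t within {0..})"
  unfolding log_weight_def log_weight_rate_def
proof (rule DERIV_sum)
  fix i assume "i \<in> {..<opt_size}"
  then have e: "opt_edge i \<in> E" using opt_edge_in_E by simp
  let ?a = "p t (opt_path ! i) - p t (opt_path ! Suc i)"
  have D_pos: "D t (opt_edge i) > 0" using diameter_pos e assms by blast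
  have L_pos': "L (opt_edge i) > 0" using L_pos e by blast
  have "((\<lambda>\<tau>. D \<tau> (opt_edge i)) has_real_derivative
           (\<bar>D t (opt_edge i) * ?a / L (opt_edge i)\<bar> - D t (opt_edge i))) (at t within {0..})"
    using diameter_deriv[OF assms, of "opt_path ! i" "opt_path ! Suc i"] e by (simp add: opt_edge_def)
  from DERIV_cmult[OF DERIV_chain2[OF DERIV_ln_divide[OF D_pos] this], of "L (opt_edge i)"]
  moreover have "L (opt_edge i) * (1 / D t (opt_edge i) *
      (\<bar>D t (opt_edge i) * ?a / L (opt_edge i)\<bar> - D t (opt_edge i))) = \<bar>?a\<bar> - L (opt_edge i)"
  proof -
    have "\<bar>D t (opt_edge i) * ?a / L (opt_edge i)\<bar> = D t (opt_edge i) * \<bar>?a\<bar> / L (opt_edge i)"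
      using D_pos L_pos' by (simp add: abs_mult)
    then show ?thesis using D_pos L_pos' by (simp add: right_diff_distrib)
  qed
  ultimately show "((\<lambda>\<tau>. L (opt_edge i) * ln (D \<tau> (opt_edge i))) has_real_derivative
          \<bar>?a\<bar> - L (opt_edge i)) (at t within {0..})" by simp
qed

text \<open>The potential drops telescope along the path to \<open>\<Delta>\<close>.\<close>
lemma log_weight_rate_ge: "log_weight_rate t \<ge> Delta t - L_opt"
proof -
  have "(\<Sum>i<opt_size. p t (opt_path ! i) - p t (opt_path ! Suc i)) =
        p t (opt_path ! 0) - p t (opt_path ! opt_size)"
    using sum_lessThan_telescope[of "\<lambda>i. - p t (opt_path ! i)" opt_size] by simp
  also have "\<dots> = Delta t"
    using opt_path(1) by (auto simp: is_path_def Delta_def opt_size_def hd_conv_nth last_conv_nth)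
  finally have telescope: "(\<Sum>i<opt_size. p t (opt_path ! i) - p t (opt_path ! Suc i)) = Delta t" .
  have "(\<Sum>i<opt_size. p t (opt_path ! i) - p t (opt_path ! Suc i)) \<le>
        (\<Sum>i<opt_size. \<bar>p t (opt_path ! i) - p t (opt_path ! Suc i)\<bar>)"
    by (rule sum_mono) (rule abs_ge_self)
  moreover have "log_weight_rate t = (\<Sum>i<opt_size. \<bar>p t (opt_path ! i) - p t (opt_path ! Suc i)\<bar>) - L_opt"
    unfolding log_weight_rate_def sum_subtractf sum_opt_edges ..
  ultimately show ?thesis using telescope by linarith
qed

text \<open>From \<open>ln x \<le> x - 1\<close>: the log-weight is dominated by the cost.\<close>
lemma log_weight_upper: assumes "t \<ge> 0" shows "2 * log_weight t \<le> cost t - 2 * L_opt"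
proof -
  have "log_weight t \<le> (\<Sum>i<opt_size. L (opt_edge i) * (D t (opt_edge i) - 1))"
    unfolding log_weight_def
  proof (rule sum_mono)
    fix i assume "i \<in> {..<opt_size}"
    then have e: "opt_edge i \<in> E" using opt_edge_in_E by simp
    have "ln (D t (opt_edge i)) \<le> D t (opt_edge i) - 1"
      using diameter_pos[OF e assms] by (rule ln_le_minus_one)
    then show "L (opt_edge i) * ln (D t (opt_edge i)) \<le> L (opt_edge i) * (D t (opt_edge i) - 1)"
      using L_pos e by (intro mult_left_mono) auto
  qed
  also have "\<dots> = (\<Sum>i<opt_size. L (opt_edge i) * D t (opt_edge i)) - L_opt"
    by (simp add: right_diff_distrib sum_subtractf sum_opt_edges)
  finally have "log_weight t \<le> (\<Sum>i<opt_size. L (opt_edge i) * D t (opt_edge i)) - L_opt" .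
  moreover have "2 * (\<Sum>i<opt_size. L (opt_edge i) * D t (opt_edge i)) \<le> cost t"
    using opt_path_arcs_le[of "\<lambda>x. L (arc_edge x) * D t (arc_edge x)"]
      arc_diameter_pos[OF _ assms] arc_length_pos
    by (simp add: cost_def arc_edge_def opt_edge_def insert_commute sum_distrib_left less_imp_le)
  ultimately show ?thesis by linarith
qed

definition lyapunov :: "real \<Rightarrow> real" where "lyapunov t = cost t / 2 - log_weight t"

definition lyapunov_rate :: "real \<Rightarrow> real" where
  "lyapunov_rate t = (flux t - cost t) / 2 - log_weight_rate t"

lemma lyapunov_deriv: "t \<ge> 0 \<Longrightarrow> (lyapunov has_real_derivative lyapunov_rate t) (at t within {0..})"
  unfolding lyapunov_def lyapunov_rate_def
  by (intro DERIV_diff DERIV_cdivide cost_deriv log_weight_deriv) auto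

lemma lyapunov_lower: "t \<ge> 0 \<Longrightarrow> L_opt \<le> lyapunov t"
  using log_weight_upper unfolding lyapunov_def by force

text \<open>Arithmetic--geometric mean applied to the flux bound \<open>flux\<^sup>2 \<le> 2 \<Delta> cost\<close>.\<close>
lemma flux_le_mean: assumes "t \<ge> 0" shows "flux t / 2 \<le> (Delta t + cost t / 2) / 2"
proof (rule power2_le_imp_le)
  have "(flux t / 2)^2 \<le> Delta t * (cost t / 2)"
    using flux_upper[OF assms] by (simp add: power_divide)
  also have "\<dots> \<le> ((Delta t + cost t / 2) / 2)^2"
  proof -
    have "((Delta t + cost t / 2) / 2)^2 = Delta t * (cost t / 2) + ((Delta t - cost t / 2) / 2)^2"
      by (simp add: power2_eq_square field_simps)
    then show ?thesis by simp
  qed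
  finally show "(flux t / 2)^2 \<le> ((Delta t + cost t / 2) / 2)^2" .
  show "0 \<le> (Delta t + cost t / 2) / 2"
    using Delta_nonneg[OF assms] cost_nonneg[OF assms] by simp
qed

text \<open>Together with \<open>flux \<ge> 2 L*\<close>, the flux bound gives \<open>L*\<^sup>2 \<le> \<Delta> cost/2\<close>.\<close>
lemma L_opt_sq_le: assumes "t \<ge> 0" shows "L_opt^2 \<le> Delta t * (cost t / 2)"
proof -
  have "L_opt^2 \<le> (flux t / 2)^2"
  proof (rule power_mono)
    show "L_opt \<le> flux t / 2" using flux_lower[OF assms] by simp
  qed (rule L_opt_nonneg)
  also have "\<dots> \<le> Delta t * (cost t / 2)"
    using flux_upper[OF assms] by (simp add: power_divide)
  finally show ?thesis .
qed

lemma lyapunov_rate_le: assumes "t \<ge> 0"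
  shows "lyapunov_rate t \<le> L_opt - (Delta t + cost t / 2) / 2"
  using flux_le_mean[OF assms] log_weight_rate_ge[of t] unfolding lyapunov_rate_def by (simp add: field_simps)

lemma lyapunov_rate_nonpos: assumes "t \<ge> 0" shows "lyapunov_rate t \<le> 0"
  using lyapunov_rate_le[OF assms] flux_le_mean[OF assms] flux_lower[OF assms] by linarith

lemma lyapunov_antitone: assumes "0 \<le> a" "a \<le> b" shows "lyapunov b \<le> lyapunov a"
proof -
  have "\<forall>\<tau>\<ge>0. ((\<lambda>t. - lyapunov t) has_real_derivative - lyapunov_rate \<tau>) (at \<tau> within {0..})"
    using lyapunov_deriv by (auto intro: DERIV_minus)
  from mono_half_line[OF this _ assms] lyapunov_rate_nonpos show ?thesis by auto
qed

text \<open>Being nonincreasing and bounded below, \<open>\<Phi>\<close> eventually decreases by less than any \<open>e > 0\<close>.\<close>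
lemma lyapunov_settles: assumes "e > 0"
  shows "\<exists>T\<ge>0. \<forall>a b. T \<le> a \<longrightarrow> a \<le> b \<longrightarrow> lyapunov a - lyapunov b < e"
proof -
  let ?S = "lyapunov ` {0..}"
  have bdd: "bdd_below ?S" using lyapunov_lower by (auto intro!: bdd_belowI)
  have ne: "?S \<noteq> {}" by auto
  have "Inf ?S < Inf ?S + e" using assms by simp
  then obtain y where "y \<in> ?S" "y < Inf ?S + e" using cInf_lessD[OF ne] by blast
  then obtain T where T: "T \<ge> 0" "lyapunov T < Inf ?S + e" by auto
  have "\<forall>a b. T \<le> a \<longrightarrow> a \<le> b \<longrightarrow> lyapunov a - lyapunov b < e"
  proof (intro allI impI)
    fix a b assume ab: "T \<le> a" "a \<le> b"
    have "lyapunov a \<le> lyapunov T" using lyapunov_antitone T ab by auto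
    moreover have "Inf ?S \<le> lyapunov b" using bdd ab T by (intro cInf_lower) auto
    ultimately show "lyapunov a - lyapunov b < e" using T by linarith
  qed
  with T show ?thesis by blast
qed

text \<open>In every late window of length \<open>width\<close>, the mean value theorem finds a time where \<open>\<Phi>'\<close> is
  almost zero, hence \<open>\<Delta> + cost/2\<close> is almost \<open>2 L*\<close>.\<close>
lemma good_time_in_window:
  fixes h width :: real assumes "h > 0" "width > 0"
  shows "\<exists>T\<ge>0. \<forall>a\<ge>T. \<exists>z. a < z \<and> z < a + width \<and> Delta z + cost z / 2 \<le> 2 * L_opt + 2 * h"
proof -
  obtain T where T: "T \<ge> 0" "\<forall>a b. T \<le> a \<longrightarrow> a \<le> b \<longrightarrow> lyapunov a - lyapunov b < width * h"
    using lyapunov_settles[of "width * h"] assms by auto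
  have "\<exists>z. a < z \<and> z < a + width \<and> Delta z + cost z / 2 \<le> 2 * L_opt + 2 * h" if a: "a \<ge> T" for a
  proof -
    obtain z where z: "a < z" "z < a + width" "lyapunov (a + width) - lyapunov a = width * lyapunov_rate z"
      using mvt_half_line[of lyapunov lyapunov_rate a "a + width"] lyapunov_deriv a T assms by auto
    have "lyapunov a - lyapunov (a + width) < width * h" using T a assms by auto
    hence "width * (- lyapunov_rate z) < width * h" using z(3) by linarith
    hence "- lyapunov_rate z < h" using assms(2) mult_less_cancel_left_pos by blast
    moreover have "lyapunov_rate z \<le> L_opt - (Delta z + cost z / 2) / 2"
      using lyapunov_rate_le z T a by auto
    ultimately have "(Delta z + cost z / 2) / 2 \<le> L_opt + h" by linarith
    hence "Delta z + cost z / 2 \<le> 2 * L_opt + 2 * h" by simp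
    with z show ?thesis by blast
  qed
  with T show ?thesis by blast
qed

text \<open>At such a time both \<open>\<Delta>\<close> and \<open>cost/2\<close> are close to \<open>L*\<close>, because their product is at
  least \<open>L*\<^sup>2\<close>.\<close>
lemma near_optimal_in_window:
  fixes \<theta> width :: real assumes "\<theta> > 0" "width > 0"
  shows "\<exists>T\<ge>0. \<forall>a\<ge>T. \<exists>z. a < z \<and> z < a + width \<and> Delta z \<le> L_opt + \<theta> \<and> cost z / 2 \<le> L_opt + \<theta>"
proof -
  obtain h where h: "h > 0" and pinch: "\<And>y1 y2. 0 \<le> y1 \<Longrightarrow> 0 \<le> y2 \<Longrightarrow> L_opt^2 \<le> y1 * y2 \<Longrightarrow>
      y1 + y2 \<le> 2 * L_opt + 2 * h \<Longrightarrow> y1 \<le> L_opt + \<theta>"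
    using pinch_by_product_and_sum[OF L_opt_nonneg assms(1)] by blast
  obtain T where T: "T \<ge> 0"
    "\<forall>a\<ge>T. \<exists>z. a < z \<and> z < a + width \<and> Delta z + cost z / 2 \<le> 2 * L_opt + 2 * h"
    using good_time_in_window[OF h assms(2)] by blast
  have "\<exists>z. a < z \<and> z < a + width \<and> Delta z \<le> L_opt + \<theta> \<and> cost z / 2 \<le> L_opt + \<theta>" if a: "a \<ge> T" for a
  proof -
    obtain z where z: "a < z" "z < a + width" "Delta z + cost z / 2 \<le> 2 * L_opt + 2 * h"
      using T a by blast
    have z0: "z \<ge> 0" using z T a by linarith
    note facts = Delta_nonneg[OF z0] cost_nonneg[OF z0] L_opt_sq_le[OF z0]
    have "Delta z \<le> L_opt + \<theta>" using pinch[of "Delta z" "cost z / 2"] facts z by simp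
    moreover have "cost z / 2 \<le> L_opt + \<theta>"
      using pinch[of "cost z / 2" "Delta z"] facts z by (simp add: mult.commute)
    ultimately show ?thesis using z by blast
  qed
  with T show ?thesis by blast
qed

text \<open>Propagating to all late times with the exponential growth bounds: the value at a good
  time shortly before \<open>t\<close> bounds \<open>\<Delta>(t)\<close> from above, and the cost at a good time shortly after
  \<open>t\<close> bounds \<open>cost(t)\<close>, hence \<open>\<Delta>(t)\<close> from below through \<open>L*\<^sup>2 \<le> \<Delta> cost/2\<close>.\<close>
lemma eventual_bounds: assumes "k > 0"
  shows "\<exists>T. \<forall>t\<ge>T. Delta t \<le> L_opt + k \<and> L_opt^2 \<le> Delta t * (L_opt + k)"
proof -
  obtain \<theta> where \<theta>: "\<theta> > 0" and margin: "(1 + \<theta>) * (L_opt + \<theta>) \<le> L_opt + k"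
    using small_multiplicative_margin[OF L_opt_nonneg assms] by blast
  define width where "width = ln (1 + \<theta>)"
  have width: "width > 0" "exp width = 1 + \<theta>" using \<theta> by (auto simp: width_def)
  obtain T where T: "T \<ge> 0"
    "\<forall>a\<ge>T. \<exists>z. a < z \<and> z < a + width \<and> Delta z \<le> L_opt + \<theta> \<and> cost z / 2 \<le> L_opt + \<theta>"
    using near_optimal_in_window[OF \<theta> width(1)] by blast
  have "Delta t \<le> L_opt + k \<and> L_opt^2 \<le> Delta t * (L_opt + k)" if t: "t \<ge> T + width" for t
  proof -
    have t0: "t \<ge> 0" using t T width by linarith
    obtain z where z: "t - width < z" "z < t" "Delta z \<le> L_opt + \<theta>"
      using T(2)[rule_format, of "t - width"] t by auto
    have "Delta t \<le> exp (t - z) * Delta z" using Delta_growth z T t by auto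
    also have "\<dots> \<le> exp width * (L_opt + \<theta>)"
      using z Delta_nonneg[of z] T t by (intro mult_mono) auto
    finally have upper: "Delta t \<le> L_opt + k" using width(2) margin by simp
    obtain w where w: "t < w" "w < t + width" "cost w / 2 \<le> L_opt + \<theta>"
      using T(2)[rule_format, of t] t width by auto
    have "cost t / 2 \<le> exp (w - t) * (cost w / 2)" using cost_growth[of t w] t0 w by simp
    also have "\<dots> \<le> exp width * (L_opt + \<theta>)"
      using w cost_nonneg[of w] t0 by (intro mult_mono) auto
    finally have "cost t / 2 \<le> L_opt + k" using width(2) margin by simp
    hence "Delta t * (cost t / 2) \<le> Delta t * (L_opt + k)"
      using Delta_nonneg[OF t0] by (intro mult_left_mono)
    with L_opt_sq_le[OF t0] upper show ?thesis by linarith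
  qed
  then show ?thesis by blast
qed

end

theorem mainTheorem6:
  fixes N :: "'v set" and E :: "'v set set" and L :: "'v set \<Rightarrow> real"
    and s0 s1 :: 'v
    and D :: "real \<Rightarrow> 'v set \<Rightarrow> real" and p :: "real \<Rightarrow> 'v \<Rightarrow> real"
  assumes "undirected_graph N E" and "connected_graph N E"
    and "s0 \<in> N" and "s1 \<in> N" and "s0 \<noteq> s1"
    and "\<forall>e\<in>E. L e > 0"
    and "physarum_trajectory N E L s0 s1 D p"
  shows "((\<lambda>t. p t s0 - p t s1) \<longlongrightarrow> shortest_path_length E L s0 s1) at_top"
proof -
  interpret physarum N E L s0 s1 D p using assms by unfold_locales
  have "(Delta \<longlongrightarrow> L_opt) at_top"
    using tendsto_by_pinching[OF L_opt_nonneg] eventual_bounds by blast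
  then show ?thesis unfolding Delta_def .
qed

end
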